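(* Let $W\in\mathbb{R}^{m\times n}$ with columns $W_1,\dots,W_n$ and $F:=WW^\top$. Assume Spectral Localization holds for all features: for every $i\in\{1,\dots,n\}$ there is $\lambda(i)>0$ with $FW_i=\lambda(i)W_i$. Let $\lambda_1,\dots,\lambda_r$ be the distinct positive eigenvalues of $F$, and set $$C_k:=\{i:\lambda(i)=\lambda_k\},\qquad V_k:=\operatorname{span}\{W_i:i\in C_k\}.$$ Then $\{C_k\}_{k=1}^r$ partitions $\{1,\dots,n\}$, the subspaces $V_k$ are pairwise orthogonal, and $$F=\sum_{k=1}^r\lambda_k P_{V_k}\quad\text{on }\operatorname{Im}(W),\qquad F=0\text{ on }\ker(F),$$ where $P_{V_k}$ is the orthogonal projector onto $V_k$. Moreover, for each $k$, $$\sum_{i\in C_k}W_iW_i^\top=\lambda_k I\quad\text{on }V_k,$$ i.e. the vectors $(W_i)_{i\in C_k}$ form a tight frame for $V_k$ with frame constant $\lambda_k$.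
   Context: A family of vectors $(w_i)$ spanning a subspace $V$ is a tight frame for $V$ with constant $\lambda$ if $\sum_i w_iw_i^\top$ acts as $\lambda$ times the identity on $V$. *)

theory Defs
  imports "HOL-Analysis.Analysis"
begin

definition is_eigenvalue :: "real^'m^'m \<Rightarrow> real \<Rightarrow> bool" where
  "is_eigenvalue F \<mu> \<longleftrightarrow> (\<exists>v. v \<noteq> 0 \<and> F *v v = \<mu> *\<^sub>R v)"

definition orth_proj :: "('a::real_inner) set \<Rightarrow> 'a \<Rightarrow> 'a" where
  "orth_proj V x = (THE p. p \<in> V \<and> (\<forall>v\<in>V. inner (x - p) v = 0))"

definition outer :: "real^'m \<Rightarrow> real^'m^'m" where
  "outer v = (\<chi> a b. v $ a * v $ b)"

end

theory Submission
  imports Defs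
begin

text \<open>
  \<open>W W\<^sup>T\<close> is the frame operator \<open>x \<mapsto> \<Sum>\<^sub>i \<langle>W\<^sub>i, x\<rangle> W\<^sub>i\<close> of the columns, hence self-adjoint,
  so eigenvectors for distinct eigenvalues are orthogonal. Once every column is an eigenvector,
  an eigenvector \<open>x\<close> for \<open>\<mu>\<close> is orthogonal to all columns outside the cluster \<open>C \<mu>\<close>; thus the
  part of the frame operator coming from \<open>C \<mu>\<close> already acts as \<open>\<mu>\<close> on \<open>x\<close> (tightness),
  a positive eigenvalue must be some \<open>\<lambda>(i)\<close>, and grouping the columns of \<open>W y\<close> by cluster
  writes it as the sum of its orthogonal projections onto the cluster spans.
\<close>

definition frame_operator :: "('i::finite \<Rightarrow> 'a::real_inner) \<Rightarrow> 'a \<Rightarrow> 'a" where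
  "frame_operator w x = (\<Sum>i\<in>UNIV. inner (w i) x *\<^sub>R w i)"

lemma linear_frame_operator: "linear (frame_operator w)"
  by (simp add: linear_iff frame_operator_def inner_add_right scaleR_add_left sum.distrib
      scaleR_sum_right)

lemma frame_operator_self_adjoint:
  "inner (frame_operator w x) y = inner x (frame_operator w y)"
  by (simp add: frame_operator_def inner_sum_left inner_sum_right inner_commute mult.commute)

lemma matrix_mult_transpose_mult_vec:
  fixes W :: "real^'n^'m"
  shows "(W ** transpose W) *v x = frame_operator (\<lambda>i. column i W) x"
proof -
  have "(W ** transpose W) *v x = W *v (transpose W *v x)"
    by (rule matrix_vector_mul_assoc[symmetric])
  also have "\<dots> = (\<Sum>i\<in>UNIV. (transpose W *v x) $ i *\<^sub>R column i W)"
    by (simp add: matrix_mult_sum scalar_mult_eq_scaleR)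
  also have "\<dots> = frame_operator (\<lambda>i. column i W) x"
    by (simp add: frame_operator_def matrix_vector_mul_component inner_vec_def column_def
        transpose_def)
  finally show ?thesis .
qed

lemma outer_mult_vec: "outer v *v x = inner v x *\<^sub>R v"
  by (simp add: outer_def vec_eq_iff matrix_vector_mult_def inner_vec_def sum_distrib_left mult_ac)

lemma sum_matrix_vector_mult:
  fixes f :: "'i \<Rightarrow> 'a::semiring_1^'n^'m"
  assumes "finite S"
  shows "sum f S *v x = (\<Sum>i\<in>S. f i *v x)"
  using assms by (induction S rule: finite_induct) (auto simp: matrix_vector_mult_add_rdistrib)

lemma orth_proj_unique:
  fixes V :: "'a::real_inner set"
  assumes "subspace V" "p \<in> V" "\<forall>v\<in>V. inner (x - p) v = 0"
  shows "orth_proj V x = p"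
  unfolding orth_proj_def
proof (rule the_equality)
  show "p \<in> V \<and> (\<forall>v\<in>V. inner (x - p) v = 0)" using assms by auto
next
  fix q assume q: "q \<in> V \<and> (\<forall>v\<in>V. inner (x - q) v = 0)"
  have "p - q \<in> V" using assms q by (simp add: subspace_diff)
  then have "inner (x - q) (p - q) = 0" "inner (x - p) (p - q) = 0" using q assms by auto
  then have "inner (p - q) (p - q) = 0" by (simp add: inner_diff_left)
  then show "q = p" by simp
qed

lemma self_adjoint_eigenvectors_orthogonal:
  fixes f :: "'a::real_inner \<Rightarrow> 'a"
  assumes "\<And>x y. inner (f x) y = inner x (f y)"
    and "f x = a *\<^sub>R x" "f y = b *\<^sub>R y" "a \<noteq> b"
  shows "inner x y = 0"
proof -
  have "a * inner x y = b * inner x y"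
    using assms(1)[of x y] assms(2,3) by simp
  then show ?thesis using \<open>a \<noteq> b\<close> by simp
qed

locale spectrally_localized =
  fixes w :: "'i::finite \<Rightarrow> 'a::real_inner" and lam :: "'i \<Rightarrow> real"
  assumes eigen: "frame_operator w (w i) = lam i *\<^sub>R w i"
begin

abbreviation cluster :: "real \<Rightarrow> 'i set" where
  "cluster \<mu> \<equiv> {i. lam i = \<mu>}"

abbreviation cluster_span :: "real \<Rightarrow> 'a set" where
  "cluster_span \<mu> \<equiv> span (w ` cluster \<mu>)"

lemma orthogonal_outside_cluster:
  assumes "frame_operator w x = \<mu> *\<^sub>R x" "lam i \<noteq> \<mu>"
  shows "inner (w i) x = 0"
  using self_adjoint_eigenvectors_orthogonal[OF frame_operator_self_adjoint eigen assms]
  by simp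

lemma cluster_span_subset_eigenspace:
  "cluster_span \<mu> \<subseteq> {x. frame_operator w x = \<mu> *\<^sub>R x}"
proof (rule span_minimal)
  show "subspace {x. frame_operator w x = \<mu> *\<^sub>R x}"
    using linear_frame_operator[of w]
    by (auto simp: subspace_def linear_0 linear_add linear_scale scaleR_add_right)
qed (use eigen in auto)

lemma cluster_spans_orthogonal:
  assumes "\<mu> \<noteq> \<nu>" "x \<in> cluster_span \<mu>" "y \<in> cluster_span \<nu>"
  shows "inner x y = 0"
  using self_adjoint_eigenvectors_orthogonal[OF frame_operator_self_adjoint _ _ assms(1)]
    cluster_span_subset_eigenspace assms(2,3) by blast

lemma tight_frame_on_eigenspace:
  assumes "frame_operator w x = \<mu> *\<^sub>R x"
  shows "(\<Sum>i\<in>cluster \<mu>. inner (w i) x *\<^sub>R w i) = \<mu> *\<^sub>R x"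
proof -
  have "(\<Sum>i\<in>cluster \<mu>. inner (w i) x *\<^sub>R w i) = frame_operator w x"
    unfolding frame_operator_def
    by (rule sum.mono_neutral_left) (auto simp: orthogonal_outside_cluster[OF assms])
  then show ?thesis using assms by simp
qed

lemma eigenvalue_in_range:
  assumes "frame_operator w x = \<mu> *\<^sub>R x" "x \<noteq> 0" "\<mu> \<noteq> 0"
  shows "\<mu> \<in> range lam"
proof (rule ccontr)
  assume "\<mu> \<notin> range lam"
  then have "inner (w i) x = 0" for i
    using orthogonal_outside_cluster[OF assms(1)] by (metis rangeI)
  then have "frame_operator w x = 0"
    by (simp add: frame_operator_def)
  with assms show False by simp
qed

lemma orth_proj_cluster_span:
  "orth_proj (cluster_span \<mu>) (\<Sum>i\<in>UNIV. y i *\<^sub>R w i) = (\<Sum>i\<in>cluster \<mu>. y i *\<^sub>R w i)"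
proof (rule orth_proj_unique)
  show "(\<Sum>i\<in>cluster \<mu>. y i *\<^sub>R w i) \<in> cluster_span \<mu>"
    by (intro span_sum span_mul span_base) auto
  have "(\<Sum>i\<in>UNIV. y i *\<^sub>R w i) - (\<Sum>i\<in>cluster \<mu>. y i *\<^sub>R w i)
      = (\<Sum>i\<in>- cluster \<mu>. y i *\<^sub>R w i)"
    by (simp add: sum.subset_diff[of "cluster \<mu>" UNIV] Compl_eq_Diff_UNIV)
  moreover have "inner (\<Sum>i\<in>- cluster \<mu>. y i *\<^sub>R w i) v = 0" if "v \<in> cluster_span \<mu>" for v
    using orthogonal_outside_cluster cluster_span_subset_eigenspace that
    by (force simp: inner_sum_left intro!: sum.neutral)
  ultimately show "\<forall>v\<in>cluster_span \<mu>.
      inner ((\<Sum>i\<in>UNIV. y i *\<^sub>R w i) - (\<Sum>i\<in>cluster \<mu>. y i *\<^sub>R w i)) v = 0"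
    by simp
qed simp

lemma frame_operator_spectral_decomposition:
  "frame_operator w (\<Sum>i\<in>UNIV. y i *\<^sub>R w i)
     = (\<Sum>\<mu>\<in>range lam. \<mu> *\<^sub>R orth_proj (cluster_span \<mu>) (\<Sum>i\<in>UNIV. y i *\<^sub>R w i))"
proof -
  have "frame_operator w (\<Sum>i\<in>UNIV. y i *\<^sub>R w i) = (\<Sum>i\<in>UNIV. lam i *\<^sub>R y i *\<^sub>R w i)"
    by (simp add: linear_sum[OF linear_frame_operator] linear_scale[OF linear_frame_operator]
        eigen mult.commute)
  also have "\<dots> = (\<Sum>\<mu>\<in>range lam. \<Sum>i\<in>cluster \<mu>. lam i *\<^sub>R y i *\<^sub>R w i)"
    using sum.group[of UNIV "range lam" lam "\<lambda>i. lam i *\<^sub>R y i *\<^sub>R w i"] by simp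
  also have "\<dots> = (\<Sum>\<mu>\<in>range lam. \<Sum>i\<in>cluster \<mu>. \<mu> *\<^sub>R y i *\<^sub>R w i)"
    by (intro sum.cong) auto
  also have "\<dots> = (\<Sum>\<mu>\<in>range lam. \<mu> *\<^sub>R orth_proj (cluster_span \<mu>) (\<Sum>i\<in>UNIV. y i *\<^sub>R w i))"
    by (simp add: orth_proj_cluster_span scaleR_sum_right)
  finally show ?thesis .
qed

end

theorem theorem3:
  fixes W :: "real^'n^'m" and lam :: "'n \<Rightarrow> real"
  defines "F \<equiv> W ** transpose W"
  defines "\<Lambda> \<equiv> {\<mu>. \<mu> > 0 \<and> is_eigenvalue F \<mu>}"
  defines "C \<equiv> (\<lambda>\<mu>. {i. lam i = \<mu>})"
  defines "V \<equiv> (\<lambda>\<mu>. span ((\<lambda>i. column i W) ` C \<mu>))"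
  assumes nonzero: "\<And>i. column i W \<noteq> 0"
  assumes pos: "\<And>i. lam i > 0"
  assumes loc: "\<And>i. F *v column i W = lam i *\<^sub>R column i W"
  shows "finite \<Lambda>
    \<and> (\<forall>\<mu>\<in>\<Lambda>. C \<mu> \<noteq> {})
    \<and> (\<forall>\<mu>\<in>\<Lambda>. \<forall>\<nu>\<in>\<Lambda>. \<mu> \<noteq> \<nu> \<longrightarrow> C \<mu> \<inter> C \<nu> = {})
    \<and> (\<Union>\<mu>\<in>\<Lambda>. C \<mu>) = UNIV
    \<and> (\<forall>\<mu>\<in>\<Lambda>. \<forall>\<nu>\<in>\<Lambda>. \<mu> \<noteq> \<nu> \<longrightarrow> (\<forall>x\<in>V \<mu>. \<forall>y\<in>V \<nu>. inner x y = 0))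
    \<and> (\<forall>x\<in>range (\<lambda>y. W *v y). F *v x = (\<Sum>\<mu>\<in>\<Lambda>. \<mu> *\<^sub>R orth_proj (V \<mu>) x))
    \<and> (\<forall>x. F *v x = 0 \<longrightarrow> F *v x = 0)
    \<and> (\<forall>\<mu>\<in>\<Lambda>. \<forall>x\<in>V \<mu>. (\<Sum>i\<in>C \<mu>. outer (column i W)) *v x = \<mu> *\<^sub>R x)"
proof -
  have F: "F *v x = frame_operator (\<lambda>i. column i W) x" for x
    unfolding F_def by (rule matrix_mult_transpose_mult_vec)
  interpret spectrally_localized "\<lambda>i. column i W" lam
    by unfold_locales (use loc F in simp)
  have \<Lambda>: "\<Lambda> = range lam"
    using pos loc nonzero eigenvalue_in_range
    by (fastforce simp: \<Lambda>_def is_eigenvalue_def F)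
  have "F *v (W *v y) = (\<Sum>\<mu>\<in>\<Lambda>. \<mu> *\<^sub>R orth_proj (V \<mu>) (W *v y))" for y
  proof -
    have "W *v y = (\<Sum>i\<in>UNIV. y $ i *\<^sub>R column i W)"
      by (simp add: matrix_mult_sum scalar_mult_eq_scaleR)
    then show ?thesis
      using frame_operator_spectral_decomposition[of "\<lambda>i. y $ i"]
      by (simp add: F \<Lambda> V_def C_def)
  qed
  moreover have "(\<Sum>i\<in>C \<mu>. outer (column i W)) *v x = \<mu> *\<^sub>R x" if "x \<in> V \<mu>" for \<mu> x
    using that cluster_span_subset_eigenspace tight_frame_on_eigenspace
    by (auto simp: V_def C_def sum_matrix_vector_mult outer_mult_vec)
  ultimately show ?thesis
    using cluster_spans_orthogonal by (auto simp: \<Lambda> C_def V_def)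
qed

end
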